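(* Let $K\subset\mathbb{R}^M$ be compact with positive Lebesgue measure, for each $N$ let $\mu_N$ be a probability measure on a finite set $\Sigma_N$, and let $F_N:\mathbb{R}^M\times\Sigma_N\to\mathbb{R}$, $F:\mathbb{R}^M\to\mathbb{R}$ be measurable such that their restrictions to $K$ satisfy: $\sup_N\sup_{K\times\Sigma_N}|F_N|<\infty$, $F$ is bounded on $K$, for every $\varepsilon>0$ $\mu_N(\{s:\sup_{\mathbf{p}\in K}|F_N(\mathbf{p},s)-F(\mathbf{p})|>\varepsilon\})\to0$, and $\lim_N\frac1N\log\int_Ke^{NF}=\sup_KF$. Assume moreover: (a) there is $C_1<\infty$ with $\sup_N\sup_{\mathbb{R}^M\times\Sigma_N}F_N<C_1$; (b) there is $C_2<\infty$ with $\int_{\mathbb{R}^M}e^{F_N(\mathbf{p},s)}d\mathbf{p}<C_2$ for all $N$ and $s\in\Sigma_N$; (c) there is $\delta>0$ with $F_N(\mathbf{p},s)-\sup_KF<-\delta$ for all $N$ and all $(\mathbf{p},s)\in K^c\times\Sigma_N$. Then $$\lim_{N\to\infty}\frac1N\,\mathbb{E}_{\mu_N}\Big[\log\int_{\mathbb{R}^M}e^{NF_N(\mathbf{p},s)}d\mathbf{p}\Big]=\sup_KF.$$ *)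

theory Defs
  imports "HOL-Analysis.Analysis" "HOL-Probability.Probability"
begin

end

theory Submission
  imports Defs
begin

text \<open>
  Write \<open>Z\<^sub>N(s) = \<integral> exp (N F\<^sub>N(p,s)) dp\<close>. Off \<open>K\<close> the integrand is at most
  \<open>exp ((N - 1)(sup\<^sub>K F - \<delta>)) exp (F\<^sub>N)\<close>, so by (b) the mass outside \<open>K\<close> is at most
  \<open>C\<^sub>2 exp ((N - 1)(sup\<^sub>K F - \<delta>))\<close>, exponentially negligible; and whenever
  \<open>sup\<^sub>K \<bar>F\<^sub>N - F\<bar> \<le> \<epsilon>\<close> the integral over \<open>K\<close> is within a factor \<open>e\<^sup>N\<^sup>\<epsilon>\<close> of
  \<open>\<integral>\<^sub>K exp (N F)\<close>, whose logarithm grows like \<open>N sup\<^sub>K F\<close>. Hence \<open>log Z\<^sub>N / N \<rightarrow> sup\<^sub>K F\<close> in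
  probability. The bounds on \<open>K\<close> together with (a) and (b) keep \<open>log Z\<^sub>N / N\<close> uniformly
  bounded, and convergence in probability of uniformly bounded variables implies convergence
  of their expectations.
\<close>

lemma exp_mult_le_exp_mult_exp:
  fixes t x c :: real
  assumes "1 \<le> t" and "x \<le> c"
  shows "exp (t * x) \<le> exp ((t - 1) * c) * exp x"
proof -
  have "(t - 1) * x \<le> (t - 1) * c"
    using assms by (intro mult_left_mono) auto
  then show ?thesis
    by (simp add: algebra_simps flip: exp_add)
qed

lemma
  fixes g :: "'a \<Rightarrow> real"
  assumes g: "g \<in> borel_measurable M" "\<And>x. 0 \<le> g x"
    and less: "(\<integral>\<^sup>+x. ennreal (g x) \<partial>M) < ennreal C"
  shows integrable_of_nn_integral_less: "integrable M g"
    and integral_le_of_nn_integral_less: "(\<integral>x. g x \<partial>M) \<le> C"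
proof -
  show "integrable M g"
    using g less by (intro integrableI_nonneg) (auto simp: less_top[symmetric] intro: order.strict_trans)
  have "(\<integral>x. g x \<partial>M) = enn2real (\<integral>\<^sup>+x. ennreal (g x) \<partial>M)"
    using g by (intro integral_eq_nn_integral) auto
  also have "\<dots> \<le> C"
    using enn2real_mono[OF less_imp_le[OF less]] less by (cases "0 \<le> C") (auto simp: ennreal_neg)
  finally show "(\<integral>x. g x \<partial>M) \<le> C" .
qed

lemma integrable_exp_mult:
  fixes f :: "'a \<Rightarrow> real"
  assumes "integrable M (\<lambda>x. exp (f x))" and "f \<in> borel_measurable M"
    and "1 \<le> t" and "\<And>x. f x \<le> c"
  shows "integrable M (\<lambda>x. exp (t * f x))"
  by (rule Bochner_Integration.integrable_bound[OF integrable_mult_right[OF assms(1), of "exp ((t - 1) * c)"]])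
     (use assms exp_mult_le_exp_mult_exp in auto)

lemma integral_exp_mult_le_set_integral:
  fixes f :: "'a \<Rightarrow> real"
  assumes exp_f: "integrable M (\<lambda>x. exp (f x))" and exp_tf: "integrable M (\<lambda>x. exp (t * f x))"
    and A: "A \<in> sets M" and t: "1 \<le> t" and outside: "\<And>x. x \<notin> A \<Longrightarrow> f x \<le> c"
  shows "(\<integral>x. exp (t * f x) \<partial>M)
           \<le> (LINT x:A|M. exp (t * f x)) + exp ((t - 1) * c) * (\<integral>x. exp (f x) \<partial>M)"
proof -
  have on_A: "integrable M (\<lambda>x. indicator A x * exp (t * f x))"
    using integrable_mult_indicator[OF A exp_tf] by simp
  have "(\<integral>x. exp (t * f x) \<partial>M)
          \<le> (\<integral>x. indicator A x * exp (t * f x) + exp ((t - 1) * c) * exp (f x) \<partial>M)"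
    using exp_mult_le_exp_mult_exp[OF t outside]
    by (intro integral_mono exp_tf Bochner_Integration.integrable_add on_A integrable_mult_right exp_f)
       (auto split: split_indicator)
  also have "\<dots> = (LINT x:A|M. exp (t * f x)) + exp ((t - 1) * c) * (\<integral>x. exp (f x) \<partial>M)"
    using on_A exp_f by (simp add: set_lebesgue_integral_def)
  finally show ?thesis .
qed

lemma integral_exp_mult_le:
  fixes f :: "'a \<Rightarrow> real"
  assumes "integrable M (\<lambda>x. exp (f x))" and "integrable M (\<lambda>x. exp (t * f x))"
    and "1 \<le> t" and "\<And>x. f x \<le> c"
  shows "(\<integral>x. exp (t * f x) \<partial>M) \<le> exp ((t - 1) * c) * (\<integral>x. exp (f x) \<partial>M)"
  using integral_exp_mult_le_set_integral[of M f t "{}" c] assms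
  by (simp add: set_lebesgue_integral_def)

lemma set_integral_exp_mult_ge:
  fixes f g :: "'a \<Rightarrow> real"
  assumes "set_integrable M A (\<lambda>x. exp (t * f x))" and "set_integrable M A (\<lambda>x. exp (t * g x))"
    and "0 \<le> t" and "\<And>x. x \<in> A \<Longrightarrow> g x \<le> f x + \<epsilon>"
  shows "exp (- (t * \<epsilon>)) * (LINT x:A|M. exp (t * g x)) \<le> (LINT x:A|M. exp (t * f x))"
proof -
  have "exp (- (t * \<epsilon>)) * exp (t * g x) \<le> exp (t * f x)" if "x \<in> A" for x
  proof -
    have "t * g x \<le> t * (f x + \<epsilon>)"
      using assms(3) assms(4)[OF that] by (intro mult_left_mono)
    then show ?thesis
      by (simp add: algebra_simps flip: exp_add)
  qed
  then have "(LINT x:A|M. exp (- (t * \<epsilon>)) * exp (t * g x)) \<le> (LINT x:A|M. exp (t * f x))"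
    using assms(1,2) by (intro set_integral_mono) auto
  then show ?thesis
    by simp
qed

lemma tendsto_expectation_of_tendsto_in_probability:
  fixes X :: "nat \<Rightarrow> 'a \<Rightarrow> real"
  assumes bounded: "\<forall>\<^sub>F N in sequentially. \<forall>s\<in>set_pmf (\<mu> N). \<bar>X N s - c\<bar> \<le> M"
    and in_prob: "\<And>\<epsilon>. \<epsilon> > 0 \<Longrightarrow> (\<lambda>N. measure_pmf.prob (\<mu> N) {s. \<bar>X N s - c\<bar> > \<epsilon>}) \<longlonglongrightarrow> 0"
  shows "(\<lambda>N. measure_pmf.expectation (\<mu> N) (X N)) \<longlonglongrightarrow> c"
  unfolding tendsto_iff
proof (intro allI impI)
  fix e :: real
  assume e: "e > 0"
  define bad where "bad N = {s. \<bar>X N s - c\<bar> > e / 2}" for N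
  have small: "\<forall>\<^sub>F N in sequentially. measure_pmf.prob (\<mu> N) (bad N) < e / (2 * (\<bar>M\<bar> + 1))"
    using in_prob[of "e / 2"] e unfolding tendsto_iff bad_def by (auto dest!: spec[of _ "e / (2 * (\<bar>M\<bar> + 1))"])
  show "\<forall>\<^sub>F N in sequentially. dist (measure_pmf.expectation (\<mu> N) (X N)) c < e"
    using bounded small
  proof eventually_elim
    case (elim N)
    let ?E = "measure_pmf.expectation (\<mu> N)"
    have dominated: "\<bar>X N s - c\<bar> \<le> e / 2 + \<bar>M\<bar> * indicator (bad N) s" if "s \<in> set_pmf (\<mu> N)" for s
      using elim(1) that e by (auto simp: bad_def split: split_indicator)
    have int_X: "integrable (measure_pmf (\<mu> N)) (X N)"
    proof (rule measure_pmf.integrable_const_bound)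
      show "AE s in measure_pmf (\<mu> N). norm (X N s) \<le> \<bar>c\<bar> + M"
        using elim(1) by (auto intro!: AE_pmfI)
    qed simp
    have int_dominating: "integrable (measure_pmf (\<mu> N)) (\<lambda>s. e / 2 + \<bar>M\<bar> * indicator (bad N) s)"
      by (rule measure_pmf.integrable_const_bound[where B = "e / 2 + \<bar>M\<bar>"])
         (use e in \<open>auto split: split_indicator\<close>)
    have "\<bar>?E (X N) - c\<bar> = \<bar>?E (\<lambda>s. X N s - c)\<bar>"
      using int_X by (simp add: Bochner_Integration.integral_diff measure_pmf.prob_space)
    also have "\<dots> \<le> ?E (\<lambda>s. \<bar>X N s - c\<bar>)"
      using integral_norm_bound[of "measure_pmf (\<mu> N)" "\<lambda>s. X N s - c"] by simp
    also have "\<dots> \<le> ?E (\<lambda>s. e / 2 + \<bar>M\<bar> * indicator (bad N) s)"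
      using dominated int_X int_dominating by (intro integral_mono_AE) (auto intro!: AE_pmfI)
    also have "\<dots> = e / 2 + \<bar>M\<bar> * measure_pmf.prob (\<mu> N) (bad N)"
      by (subst Bochner_Integration.integral_add) (auto simp: measure_pmf.prob_space measure_pmf.emeasure_eq_measure)
    also have "\<dots> < e"
    proof -
      have "\<bar>M\<bar> * measure_pmf.prob (\<mu> N) (bad N) \<le> (\<bar>M\<bar> + 1) * measure_pmf.prob (\<mu> N) (bad N)"
        by (simp add: algebra_simps)
      also have "\<dots> < (\<bar>M\<bar> + 1) * (e / (2 * (\<bar>M\<bar> + 1)))"
        using elim(2) by (intro mult_strict_left_mono) auto
      also have "\<dots> = e / 2"
        by (simp add: field_simps add_nonneg_eq_0_iff)
      finally show ?thesis
        by simp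
    qed
    finally show ?case
      by (simp add: dist_real_def)
  qed
qed

lemma eventually_le_real_mult_sequentially:
  fixes c d :: real
  assumes "0 < d"
  shows "\<forall>\<^sub>F N in sequentially. c \<le> real N * d"
proof -
  have "\<forall>\<^sub>F N in sequentially. c / d \<le> real N"
    using filterlim_real_sequentially by (simp add: filterlim_at_top)
  then show ?thesis
    by eventually_elim (use assms in \<open>simp add: pos_divide_le_eq\<close>)
qed

locale laplace_concentration =
  fixes K :: "'a::euclidean_space set"
    and \<Sigma> :: "nat \<Rightarrow> 's set"
    and FN :: "nat \<Rightarrow> 'a \<Rightarrow> 's \<Rightarrow> real"
    and F :: "'a \<Rightarrow> real"
    and B BF C1 C2 \<delta> :: real
  assumes K_compact: "compact K"
    and K_pos: "emeasure lebesgue K > 0"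
    and FN_meas: "\<And>N s. s \<in> \<Sigma> N \<Longrightarrow> (\<lambda>p. FN N p s) \<in> borel_measurable lebesgue"
    and F_meas: "F \<in> borel_measurable lebesgue"
    and FN_bounded_on_K: "\<And>N p s. p \<in> K \<Longrightarrow> s \<in> \<Sigma> N \<Longrightarrow> \<bar>FN N p s\<bar> \<le> B"
    and F_bounded_on_K: "\<And>p. p \<in> K \<Longrightarrow> \<bar>F p\<bar> \<le> BF"
    and FN_less: "\<And>N p s. s \<in> \<Sigma> N \<Longrightarrow> FN N p s < C1"
    and nn_integral_exp_FN_less:
      "\<And>N s. s \<in> \<Sigma> N \<Longrightarrow> (\<integral>\<^sup>+ p. ennreal (exp (FN N p s)) \<partial>lebesgue) < ennreal C2"
    and gap_pos: "\<delta> > 0"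
    and FN_gap: "\<And>N p s. s \<in> \<Sigma> N \<Longrightarrow> p \<notin> K \<Longrightarrow> FN N p s - (SUP q\<in>K. F q) < - \<delta>"
begin

definition sup_F :: real
  where "sup_F = (SUP p\<in>K. F p)"

definition Z :: "nat \<Rightarrow> 's \<Rightarrow> real"
  where "Z N s = (LINT p|lebesgue. exp (real N * FN N p s))"

definition Z_K :: "nat \<Rightarrow> 's \<Rightarrow> real"
  where "Z_K N s = (LINT p:K|lebesgue. exp (real N * FN N p s))"

definition Z_F :: "nat \<Rightarrow> real"
  where "Z_F N = (LINT p:K|lebesgue. exp (real N * F p))"

lemma K_lmeasurable: "K \<in> lmeasurable"
  using K_compact by (rule lmeasurable_compact)

lemma measure_K_pos: "0 < measure lebesgue K"
  using K_pos K_lmeasurable by (simp add: emeasure_eq_measure2)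

lemma K_nonempty: "K \<noteq> {}"
  using measure_K_pos by auto

lemma F_le_sup_F: "p \<in> K \<Longrightarrow> F p \<le> sup_F"
  unfolding sup_F_def using F_bounded_on_K
  by (intro cSUP_upper bdd_aboveI2[of _ _ BF]) (auto simp: abs_le_iff)

lemma abs_sup_F_le: "\<bar>sup_F\<bar> \<le> BF"
proof -
  obtain p where p: "p \<in> K"
    using K_nonempty by blast
  have "sup_F \<le> BF"
    unfolding sup_F_def using F_bounded_on_K K_nonempty by (intro cSUP_least) (auto simp: abs_le_iff)
  moreover have "- BF \<le> sup_F"
    using F_le_sup_F[OF p] F_bounded_on_K[OF p] by linarith
  ultimately show ?thesis
    by linarith
qed

lemma set_integrable_on_K:
  fixes f :: "'a \<Rightarrow> real"
  assumes "f \<in> borel_measurable lebesgue" and "\<And>p. p \<in> K \<Longrightarrow> \<bar>f p\<bar> \<le> c"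
  shows "set_integrable lebesgue K f"
  unfolding set_integrable_def using assms K_lmeasurable
  by (intro integrableI_bounded_set_indicator[where B = c]) (auto simp: fmeasurable_def)

lemma set_integrable_exp_mult_on_K:
  fixes f :: "'a \<Rightarrow> real"
  assumes "f \<in> borel_measurable lebesgue" and "\<And>p. p \<in> K \<Longrightarrow> \<bar>f p\<bar> \<le> c"
  shows "set_integrable lebesgue K (\<lambda>p. exp (real N * f p))"
proof (rule set_integrable_on_K)
  show "(\<lambda>p. exp (real N * f p)) \<in> borel_measurable lebesgue"
    using assms(1) by measurable
  show "\<bar>exp (real N * f p)\<bar> \<le> exp (real N * c)" if "p \<in> K" for p
    using assms(2)[OF that] by (simp add: mult_left_mono abs_le_iff)
qed

lemma
  assumes "s \<in> \<Sigma> N"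
  shows integrable_exp_FN: "integrable lebesgue (\<lambda>p. exp (FN N p s))"
    and integral_exp_FN_le: "(\<integral>p. exp (FN N p s) \<partial>lebesgue) \<le> C2"
  using FN_meas[OF assms] nn_integral_exp_FN_less[OF assms]
  by (auto intro: integrable_of_nn_integral_less integral_le_of_nn_integral_less)

lemma C2_pos: "s \<in> \<Sigma> N \<Longrightarrow> 0 < C2"
  using nn_integral_exp_FN_less[of s N] by (auto simp: ennreal_neg intro: ccontr)

lemma integrable_exp_mult_FN:
  "1 \<le> N \<Longrightarrow> s \<in> \<Sigma> N \<Longrightarrow> integrable lebesgue (\<lambda>p. exp (real N * FN N p s))"
  using FN_less by (intro integrable_exp_mult[where c = C1] integrable_exp_FN FN_meas) (auto intro: less_imp_le)

lemma Z_K_le_Z: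
  assumes "1 \<le> N" and "s \<in> \<Sigma> N"
  shows "Z_K N s \<le> Z N s"
proof -
  have "K \<in> sets lebesgue"
    using K_lmeasurable by auto
  then have "integrable lebesgue (\<lambda>p. indicator K p * exp (real N * FN N p s))"
    using integrable_mult_indicator[OF _ integrable_exp_mult_FN[OF assms]] by simp
  then show ?thesis
    unfolding Z_K_def Z_def set_lebesgue_integral_def
    using integrable_exp_mult_FN[OF assms] by (intro integral_mono) (auto simp: indicator_def)
qed

lemma Z_le_Z_K_add:
  assumes "1 \<le> N" and "s \<in> \<Sigma> N"
  shows "Z N s \<le> Z_K N s + C2 * exp ((real N - 1) * (sup_F - \<delta>))"
proof -
  have "FN N p s \<le> sup_F - \<delta>" if "p \<notin> K" for p
    using FN_gap[OF assms(2) that] unfolding sup_F_def by linarith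
  then have "Z N s \<le> Z_K N s + exp ((real N - 1) * (sup_F - \<delta>)) * (\<integral>p. exp (FN N p s) \<partial>lebesgue)"
    unfolding Z_def Z_K_def using assms K_lmeasurable
    by (intro integral_exp_mult_le_set_integral integrable_exp_FN integrable_exp_mult_FN) auto
  also have "\<dots> \<le> Z_K N s + exp ((real N - 1) * (sup_F - \<delta>)) * C2"
    using integral_exp_FN_le[OF assms(2)] by simp
  finally show ?thesis
    by (simp add: mult.commute)
qed

lemma Z_le:
  assumes "1 \<le> N" and "s \<in> \<Sigma> N"
  shows "Z N s \<le> C2 * exp ((real N - 1) * C1)"
proof -
  have "Z N s \<le> exp ((real N - 1) * C1) * (\<integral>p. exp (FN N p s) \<partial>lebesgue)"
    unfolding Z_def using assms FN_less[OF assms(2)]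
    by (intro integral_exp_mult_le integrable_exp_FN integrable_exp_mult_FN) (auto simp: less_imp_le)
  also have "\<dots> \<le> exp ((real N - 1) * C1) * C2"
    using integral_exp_FN_le[OF assms(2)] by simp
  finally show ?thesis
    by (simp add: mult.commute)
qed

lemma set_integral_exp_mult_ge_measure:
  fixes f :: "'a \<Rightarrow> real"
  assumes "f \<in> borel_measurable lebesgue" and "\<And>p. p \<in> K \<Longrightarrow> \<bar>f p\<bar> \<le> c"
  shows "measure lebesgue K * exp (- (real N * c)) \<le> (LINT p:K|lebesgue. exp (real N * f p))"
proof -
  have "0 \<le> c"
    using K_nonempty assms(2) by (force intro: order.trans[OF abs_ge_zero])
  then have "exp (- (real N * 0)) * (LINT p:K|lebesgue. exp (real N * - c))
               \<le> (LINT p:K|lebesgue. exp (real N * f p))"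
    using assms
    by (intro set_integral_exp_mult_ge set_integrable_exp_mult_on_K[where c = c])
       (force simp: abs_le_iff)+
  then show ?thesis
    by (simp add: set_integral_const[OF fmeasurableD[OF K_lmeasurable]
          fmeasurableD2[OF K_lmeasurable, folded infinity_ennreal_def]])
qed

lemma Z_K_ge: "s \<in> \<Sigma> N \<Longrightarrow> measure lebesgue K * exp (- (real N * B)) \<le> Z_K N s"
  unfolding Z_K_def using FN_meas FN_bounded_on_K by (intro set_integral_exp_mult_ge_measure)

lemma Z_F_pos: "0 < Z_F N"
proof -
  have "measure lebesgue K * exp (- (real N * BF)) \<le> Z_F N"
    unfolding Z_F_def using F_meas F_bounded_on_K by (intro set_integral_exp_mult_ge_measure)
  then show ?thesis
    using measure_K_pos by (meson exp_gt_zero less_le_trans mult_pos_pos)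
qed

lemma Z_K_pos: "s \<in> \<Sigma> N \<Longrightarrow> 0 < Z_K N s"
  using Z_K_ge[of s N] measure_K_pos by (meson exp_gt_zero less_le_trans mult_pos_pos)

lemma B_nonneg: "s \<in> \<Sigma> N \<Longrightarrow> 0 \<le> B"
  using K_nonempty FN_bounded_on_K by (force intro: order.trans[OF abs_ge_zero])

lemma Z_pos: "1 \<le> N \<Longrightarrow> s \<in> \<Sigma> N \<Longrightarrow> 0 < Z N s"
  using Z_K_pos Z_K_le_Z by (meson less_le_trans)

lemma ln_Z_K_close_ln_Z_F:
  assumes s: "s \<in> \<Sigma> N" and close: "\<And>p. p \<in> K \<Longrightarrow> \<bar>FN N p s - F p\<bar> \<le> \<epsilon>"
  shows "\<bar>ln (Z_K N s) - ln (Z_F N)\<bar> \<le> real N * \<epsilon>"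
proof -
  have int_FN: "set_integrable lebesgue K (\<lambda>p. exp (real N * FN N p s))"
    using FN_meas[OF s] FN_bounded_on_K[OF _ s] by (rule set_integrable_exp_mult_on_K)
  have int_F: "set_integrable lebesgue K (\<lambda>p. exp (real N * F p))"
    using F_meas F_bounded_on_K by (rule set_integrable_exp_mult_on_K)
  have "exp (- (real N * \<epsilon>)) * Z_F N \<le> Z_K N s"
    unfolding Z_K_def Z_F_def using int_FN int_F close
    by (intro set_integral_exp_mult_ge) (force simp: abs_le_iff)+
  from ln_mono[OF this] have lower: "ln (Z_F N) - real N * \<epsilon> \<le> ln (Z_K N s)"
    using Z_F_pos[of N] by (simp add: ln_mult)
  have "exp (- (real N * \<epsilon>)) * Z_K N s \<le> Z_F N"
    unfolding Z_K_def Z_F_def using int_FN int_F close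
    by (intro set_integral_exp_mult_ge) (force simp: abs_le_iff)+
  from ln_mono[OF this] have upper: "ln (Z_K N s) - real N * \<epsilon> \<le> ln (Z_F N)"
    using Z_K_pos[OF s] by (simp add: ln_mult)
  show ?thesis
    using lower upper by linarith
qed

lemma abs_ln_Z_le:
  assumes N: "1 \<le> N" and s: "s \<in> \<Sigma> N"
  shows "\<bar>ln (Z N s)\<bar> \<le> real N * (\<bar>ln (measure lebesgue K)\<bar> + B + \<bar>ln C2\<bar> + \<bar>C1\<bar>)"
proof -
  let ?m = "measure lebesgue K"
  have N_ge_1: "1 \<le> real N"
    using N by simp
  have "ln (?m * exp (- (real N * B))) \<le> ln (Z N s)"
    using Z_K_ge[OF s] Z_K_le_Z[OF N s] measure_K_pos by (intro ln_mono) auto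
  then have "ln ?m - real N * B \<le> ln (Z N s)"
    using measure_K_pos by (simp add: ln_mult)
  moreover have "\<bar>ln ?m\<bar> \<le> real N * \<bar>ln ?m\<bar>"
    using mult_right_mono[OF N_ge_1 abs_ge_zero] by simp
  ultimately have lower: "- (real N * (\<bar>ln ?m\<bar> + B)) \<le> ln (Z N s)"
    by (simp add: algebra_simps abs_le_iff)
  have "ln (Z N s) \<le> ln (C2 * exp ((real N - 1) * C1))"
    using Z_le[OF N s] Z_pos[OF N s] by (intro ln_mono) auto
  then have "ln (Z N s) \<le> ln C2 + (real N - 1) * C1"
    using C2_pos[OF s] by (simp add: ln_mult)
  moreover have "\<bar>ln C2\<bar> \<le> real N * \<bar>ln C2\<bar>"
    using mult_right_mono[OF N_ge_1 abs_ge_zero] by simp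
  moreover have "(real N - 1) * C1 \<le> (real N - 1) * \<bar>C1\<bar>"
    using N_ge_1 by (intro mult_left_mono) auto
  ultimately have upper: "ln (Z N s) \<le> real N * (\<bar>ln C2\<bar> + \<bar>C1\<bar>)"
    using abs_ge_zero[of C1] by (simp add: algebra_simps abs_le_iff) linarith
  have "0 \<le> real N * (\<bar>ln ?m\<bar> + B)" and "0 \<le> real N * (\<bar>ln C2\<bar> + \<bar>C1\<bar>)"
    using B_nonneg[OF s] by simp_all
  moreover have "real N * (\<bar>ln ?m\<bar> + B + \<bar>ln C2\<bar> + \<bar>C1\<bar>)
                   = real N * (\<bar>ln ?m\<bar> + B) + real N * (\<bar>ln C2\<bar> + \<bar>C1\<bar>)"
    by (simp add: algebra_simps)
  ultimately show ?thesis
    using lower upper by linarith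
qed

lemma abs_FN_minus_F_le_SUP:
  assumes "p \<in> K" and s: "s \<in> \<Sigma> N"
  shows "\<bar>FN N p s - F p\<bar> \<le> (SUP q\<in>K. \<bar>FN N q s - F q\<bar>)"
proof (rule cSUP_upper[OF assms(1)])
  have "\<bar>FN N q s - F q\<bar> \<le> B + BF" if "q \<in> K" for q
    using FN_bounded_on_K[OF that s] F_bounded_on_K[OF that] by linarith
  then show "bdd_above ((\<lambda>q. \<bar>FN N q s - F q\<bar>) ` K)"
    by (intro bdd_aboveI2)
qed

lemma ln_Z_le_of_ln_Z_K_le:
  assumes N: "1 \<le> N" and s: "s \<in> \<Sigma> N"
    and Z_K_le: "ln (Z_K N s) \<le> real N * (sup_F + \<eta>)" and "0 \<le> \<eta>"
    and large: "ln C2 - sup_F + \<delta> \<le> real N * \<delta>"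
  shows "ln (Z N s) \<le> ln 2 + real N * (sup_F + \<eta>)"
proof -
  have "Z_K N s \<le> exp (real N * (sup_F + \<eta>))"
    using Z_K_le Z_K_pos[OF s] by (metis exp_le_cancel_iff exp_ln)
  moreover have "C2 * exp ((real N - 1) * (sup_F - \<delta>)) \<le> exp (real N * (sup_F + \<eta>))"
  proof -
    have "C2 * exp ((real N - 1) * (sup_F - \<delta>)) = exp (ln C2 + (real N - 1) * (sup_F - \<delta>))"
      using C2_pos[OF s] by (simp add: exp_add)
    also have "\<dots> \<le> exp (real N * (sup_F + \<eta>))"
      using large mult_nonneg_nonneg[OF of_nat_0_le_iff \<open>0 \<le> \<eta>\<close>, of N]
      by (simp add: algebra_simps)
    finally show ?thesis .
  qed
  ultimately have "Z N s \<le> 2 * exp (real N * (sup_F + \<eta>))"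
    using Z_le_Z_K_add[OF N s] by linarith
  then have "ln (Z N s) \<le> ln (2 * exp (real N * (sup_F + \<eta>)))"
    using Z_pos[OF N s] by (intro ln_mono) auto
  then show ?thesis
    by (simp add: ln_mult)
qed

lemma ln_Z_close:
  assumes laplace: "(\<lambda>N. ln (Z_F N) / real N) \<longlonglongrightarrow> sup_F" and \<epsilon>: "0 < \<epsilon>"
  shows "\<forall>\<^sub>F N in sequentially. \<forall>s\<in>\<Sigma> N.
           (SUP p\<in>K. \<bar>FN N p s - F p\<bar>) \<le> \<epsilon> \<longrightarrow> \<bar>ln (Z N s) / real N - sup_F\<bar> \<le> 3 * \<epsilon>"
  using eventually_ge_at_top[of 1] laplace[unfolded tendsto_iff, rule_format, OF \<epsilon>]
    eventually_le_real_mult_sequentially[OF \<epsilon>, of "ln 2"]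
    eventually_le_real_mult_sequentially[OF gap_pos, of "ln C2 - sup_F + \<delta>"]
proof eventually_elim
  case (elim N)
  have N_pos: "0 < real N"
    using elim(1) by simp
  have ln_Z_F: "real N * (sup_F - \<epsilon>) \<le> ln (Z_F N)" "ln (Z_F N) \<le> real N * (sup_F + \<epsilon>)"
    using elim(2) N_pos by (auto simp: dist_real_def abs_less_iff field_simps)
  show ?case
  proof (intro ballI impI)
    fix s
    assume s: "s \<in> \<Sigma> N" and dev: "(SUP p\<in>K. \<bar>FN N p s - F p\<bar>) \<le> \<epsilon>"
    have "\<bar>ln (Z_K N s) - ln (Z_F N)\<bar> \<le> real N * \<epsilon>"
      using abs_FN_minus_F_le_SUP[OF _ s] dev by (intro ln_Z_K_close_ln_Z_F[OF s]) (meson order.trans)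
    then have ln_Z_K: "real N * (sup_F - 2 * \<epsilon>) \<le> ln (Z_K N s)" "ln (Z_K N s) \<le> real N * (sup_F + 2 * \<epsilon>)"
      using ln_Z_F by (auto simp: algebra_simps abs_le_iff)
    have "ln (Z_K N s) \<le> ln (Z N s)"
      using Z_K_pos[OF s] Z_K_le_Z[OF elim(1) s] by (intro ln_mono)
    then have "real N * (sup_F - 3 * \<epsilon>) \<le> ln (Z N s)"
      using ln_Z_K(1) N_pos \<epsilon> by (simp add: algebra_simps) (use mult_pos_pos[OF \<epsilon> N_pos] in linarith)
    moreover have "ln (Z N s) \<le> real N * (sup_F + 3 * \<epsilon>)"
      using ln_Z_le_of_ln_Z_K_le[OF elim(1) s ln_Z_K(2) _ elim(4)] elim(3) \<epsilon>
      by (simp add: algebra_simps)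
    ultimately show "\<bar>ln (Z N s) / real N - sup_F\<bar> \<le> 3 * \<epsilon>"
      using N_pos by (simp add: abs_le_iff field_simps)
  qed
qed

theorem expectation_ln_Z_tendsto:
  fixes \<mu> :: "nat \<Rightarrow> 's pmf"
  assumes \<mu>_on: "\<And>N. set_pmf (\<mu> N) \<subseteq> \<Sigma> N"
    and laplace: "(\<lambda>N. ln (Z_F N) / real N) \<longlonglongrightarrow> sup_F"
    and conv_prob: "\<And>\<epsilon>. \<epsilon> > 0 \<Longrightarrow>
      (\<lambda>N. measure_pmf.prob (\<mu> N) {s \<in> \<Sigma> N. (SUP p\<in>K. \<bar>FN N p s - F p\<bar>) > \<epsilon>}) \<longlonglongrightarrow> 0"
  shows "(\<lambda>N. measure_pmf.expectation (\<mu> N) (\<lambda>s. ln (Z N s)) / real N) \<longlonglongrightarrow> sup_F"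
proof -
  define M where "M = \<bar>ln (measure lebesgue K)\<bar> + B + \<bar>ln C2\<bar> + \<bar>C1\<bar> + BF"
  have "(\<lambda>N. measure_pmf.expectation (\<mu> N) (\<lambda>s. ln (Z N s) / real N)) \<longlonglongrightarrow> sup_F"
  proof (rule tendsto_expectation_of_tendsto_in_probability)
    show "\<forall>\<^sub>F N in sequentially. \<forall>s\<in>set_pmf (\<mu> N). \<bar>ln (Z N s) / real N - sup_F\<bar> \<le> M"
      using eventually_ge_at_top[of 1]
    proof eventually_elim
      case (elim N)
      show ?case
      proof
        fix s
        assume "s \<in> set_pmf (\<mu> N)"
        then have s: "s \<in> \<Sigma> N"
          using \<mu>_on by blast
        have "\<bar>ln (Z N s) / real N\<bar> \<le> M - BF"
          using abs_ln_Z_le[OF elim s] elim by (simp add: M_def abs_div divide_le_eq mult.commute)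
        then show "\<bar>ln (Z N s) / real N - sup_F\<bar> \<le> M"
          using abs_sup_F_le by linarith
      qed
    qed
  next
    fix \<epsilon> :: real
    assume \<epsilon>: "0 < \<epsilon>"
    let ?bad = "\<lambda>N. {s \<in> \<Sigma> N. (SUP p\<in>K. \<bar>FN N p s - F p\<bar>) > \<epsilon> / 3}"
    have "\<forall>\<^sub>F N in sequentially. \<forall>s\<in>\<Sigma> N.
            (SUP p\<in>K. \<bar>FN N p s - F p\<bar>) \<le> \<epsilon> / 3 \<longrightarrow> \<bar>ln (Z N s) / real N - sup_F\<bar> \<le> \<epsilon>"
      using ln_Z_close[OF laplace, of "\<epsilon> / 3"] \<epsilon> by simp
    then have "\<forall>\<^sub>F N in sequentially.
            measure_pmf.prob (\<mu> N) {s. \<bar>ln (Z N s) / real N - sup_F\<bar> > \<epsilon>}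
              \<le> measure_pmf.prob (\<mu> N) (?bad N)"
    proof eventually_elim
      case (elim N)
      then show ?case
        using \<mu>_on by (intro measure_pmf.finite_measure_mono_AE AE_pmfI) force+
    qed
    then show "(\<lambda>N. measure_pmf.prob (\<mu> N) {s. \<bar>ln (Z N s) / real N - sup_F\<bar> > \<epsilon>}) \<longlonglongrightarrow> 0"
      by (intro tendsto_sandwich[OF _ _ tendsto_const conv_prob[of "\<epsilon> / 3"]]) (use \<epsilon> in auto)
  qed
  then show ?thesis
    by simp
qed

end

theorem mainTheorem13:
  fixes K :: "(real ^ 'm) set"
    and \<Sigma> :: "nat \<Rightarrow> 's set"
    and \<mu> :: "nat \<Rightarrow> 's pmf"
    and FN :: "nat \<Rightarrow> real ^ 'm \<Rightarrow> 's \<Rightarrow> real"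
    and F :: "real ^ 'm \<Rightarrow> real"
  assumes K_compact: "compact K"
    and K_pos: "emeasure lebesgue K > 0"
    and \<Sigma>_finite: "\<And>N. finite (\<Sigma> N)"
    and \<mu>_on: "\<And>N. set_pmf (\<mu> N) \<subseteq> \<Sigma> N"
    and FN_meas: "\<And>N s. s \<in> \<Sigma> N \<Longrightarrow> (\<lambda>p. FN N p s) \<in> borel_measurable lebesgue"
    and F_meas: "F \<in> borel_measurable lebesgue"
    and FN_bdd_K: "\<exists>B. \<forall>N. \<forall>p\<in>K. \<forall>s\<in>\<Sigma> N. \<bar>FN N p s\<bar> \<le> B"
    and F_bdd_K: "bounded (F ` K)"
    and conv_prob: "\<And>\<epsilon>. \<epsilon> > 0 \<Longrightarrow>
        (\<lambda>N. measure_pmf.prob (\<mu> N)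
           {s \<in> \<Sigma> N. (SUP p\<in>K. \<bar>FN N p s - F p\<bar>) > \<epsilon>}) \<longlonglongrightarrow> 0"
    and laplace_K: "(\<lambda>N. ln (LINT p:K|lebesgue. exp (real N * F p)) / real N)
        \<longlonglongrightarrow> (SUP p\<in>K. F p)"
    and cond_a: "\<exists>C1. \<forall>N. \<forall>p. \<forall>s\<in>\<Sigma> N. FN N p s < C1"
    and cond_b: "\<exists>C2. \<forall>N. \<forall>s\<in>\<Sigma> N.
        (\<integral>\<^sup>+ p. ennreal (exp (FN N p s)) \<partial>lebesgue) < ennreal C2"
    and cond_c: "\<exists>\<delta>>0. \<forall>N. \<forall>p. \<forall>s\<in>\<Sigma> N. p \<notin> K \<longrightarrow>
        FN N p s - (SUP q\<in>K. F q) < - \<delta>"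
  shows "(\<lambda>N. measure_pmf.expectation (\<mu> N)
            (\<lambda>s. ln (LINT p|lebesgue. exp (real N * FN N p s))) / real N)
         \<longlonglongrightarrow> (SUP p\<in>K. F p)"
proof -
  obtain B where B: "\<And>N p s. p \<in> K \<Longrightarrow> s \<in> \<Sigma> N \<Longrightarrow> \<bar>FN N p s\<bar> \<le> B"
    using FN_bdd_K by blast
  obtain BF where BF: "\<And>p. p \<in> K \<Longrightarrow> \<bar>F p\<bar> \<le> BF"
    using F_bdd_K by (auto simp: bounded_real)
  obtain C1 where C1: "\<And>N p s. s \<in> \<Sigma> N \<Longrightarrow> FN N p s < C1"
    using cond_a by blast
  obtain C2 where C2: "\<And>N s. s \<in> \<Sigma> N \<Longrightarrow> (\<integral>\<^sup>+ p. ennreal (exp (FN N p s)) \<partial>lebesgue) < ennreal C2"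
    using cond_b by blast
  obtain \<delta> where "\<delta> > 0" and "\<And>N p s. s \<in> \<Sigma> N \<Longrightarrow> p \<notin> K \<Longrightarrow> FN N p s - (SUP q\<in>K. F q) < - \<delta>"
    using cond_c by blast
  then interpret laplace_concentration K \<Sigma> FN F B BF C1 C2 \<delta>
    using K_compact K_pos FN_meas F_meas B BF C1 C2 by unfold_locales
  show ?thesis
    using expectation_ln_Z_tendsto[OF \<mu>_on] laplace_K conv_prob
    unfolding Z_def Z_F_def sup_F_def by blast
qed

end
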